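(* Let $k\ge 7$ be an integer and $r=(\log k)^2/k$ (natural logarithm). For $\delta\in[0,1]$ let $g(\delta)=k\delta(1-\delta)^{k-1}$ and \[ \gamma(\delta)=\frac{g(\delta)^{r}}{\delta^{\delta}(1-\delta)^{1-\delta}} \] (with the convention $0^0=1$). Then $\max_{\delta\in[0,1]}\gamma(\delta)<1$. *)

theory Defs
  imports "HOL-Analysis.Analysis"
begin

definition pow00 :: "real \<Rightarrow> real \<Rightarrow> real" where
  "pow00 x a = (if x = 0 then (if a = 0 then 1 else 0) else x powr a)"

definition gfun :: "nat \<Rightarrow> real \<Rightarrow> real" where
  "gfun k \<delta> = real k * \<delta> * (1 - \<delta>) ^ (k - 1)"

definition rpar :: "nat \<Rightarrow> real" where
  "rpar k = (ln (real k))\<^sup>2 / real k"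

definition gamma_fun :: "nat \<Rightarrow> real \<Rightarrow> real" where
  "gamma_fun k \<delta> = pow00 (gfun k \<delta>) (rpar k) /
      (pow00 \<delta> \<delta> * pow00 (1 - \<delta>) (1 - \<delta>))"

end

theory Submission
  imports Defs "HOL-Real_Asymp.Real_Asymp"
begin

text \<open>
  Put \<open>K = k\<close>, \<open>L = ln K\<close> and \<open>x = K\<delta>\<close>. Then
  \<open>K ln \<gamma>(\<delta>) = (L\<^sup>2 - x) ln x + x L + (L\<^sup>2(K - 1) - K + x) ln (1 - \<delta>)\<close>,
  and \<open>ln (1 - \<delta>) \<le> -\<delta> - \<delta>\<^sup>2/2\<close> bounds this by a function of \<open>x\<close> alone. That function
  is negative: for \<open>x \<ge> L\<^sup>2\<close> the linear terms dominate, and for \<open>x < L\<^sup>2\<close> replacing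
  \<open>ln x\<close> by a tangent line (at \<open>1\<close> when \<open>K \<ge> 21\<close>, at \<open>3/2\<close> when \<open>K \<le> 20\<close>) leaves a
  quadratic in \<open>x\<close> with negative discriminant, checked on a few ranges of \<open>K\<close> using
  rational bounds for a handful of logarithms. At \<open>\<delta> = 0\<close> and \<open>\<delta> = 1\<close> we have \<open>\<gamma> = 0\<close>, and
  \<open>\<gamma>\<close> is continuous on \<open>[0, 1]\<close>, so its maximum is attained and is below \<open>1\<close>.
\<close>

lemma ln_add_one_lower:
  fixes u :: real assumes "0 \<le> u"
  shows "2*u/(2+u) \<le> ln (1+u)"
proof -
  let ?f = "\<lambda>u::real. ln (1+u) - 2*u/(2+u)"
  have deriv: "\<And>t. 0 \<le> t \<Longrightarrow> DERIV ?f t :> t^2/((1+t)*(2+t)^2)"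
    by (rule derivative_eq_intros refl | simp)+
      (simp add: divide_simps, simp add: algebra_simps power2_eq_square)
  have "?f 0 \<le> ?f u"
  proof (rule DERIV_nonneg_imp_nondecreasing[OF assms])
    fix t :: real assume "0 \<le> t"
    with deriv have "DERIV ?f t :> t^2/((1+t)*(2+t)^2)" "0 \<le> t^2/((1+t)*(2+t)^2)" by auto
    then show "\<exists>y. DERIV ?f t :> y \<and> 0 \<le> y" by blast
  qed
  then show ?thesis by simp
qed
lemma ln_add_one_upper:
  fixes u :: real assumes "0 \<le> u"
  shows "ln (1+u) \<le> u*(6+u)/(6+4*u)"
proof -
  let ?f = "\<lambda>u::real. u*(6+u)/(6+4*u) - ln (1+u)"
  have deriv: "\<And>t. 0 \<le> t \<Longrightarrow> DERIV ?f t :> t^3/((1+t)*(3+2*t)^2)"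
    by (rule derivative_eq_intros refl | simp)+
      (simp add: divide_simps, simp add: algebra_simps power2_eq_square power3_eq_cube)
  have "?f 0 \<le> ?f u"
  proof (rule DERIV_nonneg_imp_nondecreasing[OF assms])
    fix t :: real assume "0 \<le> t"
    with deriv have "DERIV ?f t :> t^3/((1+t)*(3+2*t)^2)" "0 \<le> t^3/((1+t)*(3+2*t)^2)" by auto
    then show "\<exists>y. DERIV ?f t :> y \<and> 0 \<le> y" by blast
  qed
  then show ?thesis by simp
qed
lemma ln_one_minus_le:
  fixes d :: real assumes "0 \<le> d" "d < 1"
  shows "ln (1-d) \<le> -d - d^2/2"
proof -
  let ?f = "\<lambda>t::real. -t - t^2/2 - ln (1-t)"
  have deriv: "\<And>t. t < 1 \<Longrightarrow> DERIV ?f t :> t^2/(1-t)"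
    by (rule derivative_eq_intros refl | simp)+
      (simp add: divide_simps, simp add: algebra_simps power2_eq_square)
  have "?f 0 \<le> ?f d"
  proof (rule DERIV_nonneg_imp_nondecreasing[OF assms(1)])
    fix t :: real assume "t \<le> d"
    with deriv assms have "DERIV ?f t :> t^2/(1-t)" "0 \<le> t^2/(1-t)" by auto
    then show "\<exists>y. DERIV ?f t :> y \<and> 0 \<le> y" by blast
  qed
  then show ?thesis by simp
qed

lemma ln_squared_less_self:
  fixes K :: real assumes "1 \<le> K"
  shows "(ln K)^2 < K"
proof -
  have sK: "sqrt K > 0" using assms by simp
  have "ln (sqrt K / exp 1) \<le> sqrt K / exp 1 - 1" using sK by (intro ln_le_minus_one) simp
  then have "ln (sqrt K) \<le> sqrt K / exp 1" using sK by (simp add: ln_div)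
  moreover have "ln K = 2 * ln (sqrt K)" using assms by (simp add: ln_sqrt)
  ultimately have "(ln K)^2 \<le> (2 * sqrt K / exp 1)^2"
    using assms by (intro power_mono) auto
  also have "\<dots> = 4 * K / (exp 1)^2" using assms by (simp add: power_divide power_mult_distrib)
  also have "\<dots> < K"
  proof -
    have "(2::real)^2 < (exp 1)^2"
      using exp_lower_Taylor_quadratic[of 1] by (intro power_strict_mono) auto
    then show ?thesis using assms by (simp add: divide_simps)
  qed
  finally show ?thesis .
qed

text \<open>
  The ratios \<open>16/15, 25/24, 81/80, 50/49, 121/120\<close> are close to \<open>1\<close>, so the two Pade
  bounds above pin down \<open>ln 2, ln 3, ln 5, ln 7, ln 11\<close> to three decimals.
\<close>
lemma ln_numeral_bounds:
  "1.945 \<le> ln (7::real)" "ln (7::real) \<le> 1.947"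
  "2.078 \<le> ln (8::real)" "ln (10::real) \<le> 2.304"
  "2.397 \<le> ln (11::real)" "ln (20::real) \<le> 2.997"
  "3 < ln (21::real)"
  "0.404 \<le> ln (3/2::real)" "ln (3/2::real) \<le> 0.407"
proof -
  have ratios:
    "ln (2^4 / (3 * 5) :: real) = 4 * ln 2 - ln 3 - ln 5"
    "ln (5^2 / (2^3 * 3) :: real) = 2 * ln 5 - 3 * ln 2 - ln 3"
    "ln (3^4 / (2^4 * 5) :: real) = 4 * ln 3 - 4 * ln 2 - ln 5"
    "ln (2 * 5^2 / 7^2 :: real) = ln 2 + 2 * ln 5 - 2 * ln 7"
    "ln (11^2 / (2^3 * 3 * 5) :: real) = 2 * ln 11 - 3 * ln 2 - ln 3 - ln 5"
    by (simp only: ln_div ln_mult ln_realpow; simp)+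
  have composite: "ln (8::real) = 3 * ln 2" "ln (10::real) = ln 2 + ln 5"
    "ln (20::real) = 2 * ln 2 + ln 5" "ln (21::real) = ln 3 + ln 7"
    "ln (3/2::real) = ln 3 - ln 2"
    using ln_realpow[of 2 3] ln_mult[of 2 5] ln_mult[of 4 5] ln_realpow[of 2 2]
      ln_mult[of 3 7] ln_div[of 3 2]
    by simp_all
  note bounds = ratios composite
    ln_add_one_lower[of "1/15"] ln_add_one_upper[of "1/15"]
    ln_add_one_lower[of "1/24"] ln_add_one_upper[of "1/24"]
    ln_add_one_lower[of "1/80"] ln_add_one_upper[of "1/80"]
    ln_add_one_lower[of "1/49"] ln_add_one_upper[of "1/49"]
    ln_add_one_lower[of "1/120"] ln_add_one_upper[of "1/120"]
  show "1.945 \<le> ln (7::real)" "ln (7::real) \<le> 1.947"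
    "2.078 \<le> ln (8::real)" "ln (10::real) \<le> 2.304"
    "2.397 \<le> ln (11::real)" "ln (20::real) \<le> 2.997"
    "3 < ln (21::real)"
    "0.404 \<le> ln (3/2::real)" "ln (3/2::real) \<le> 0.407"
    using bounds by (simp_all add: field_simps; linarith)+
qed

lemma quadratic_negative:
  fixes a b c x :: real
  assumes "0 < a" "b^2 < 4*a*c"
  shows "-a*x^2 + b*x - c < 0"
proof -
  have "4*a*(-a*x^2 + b*x - c) = (b^2 - 4*a*c) - (2*a*x - b)^2"
    by (simp add: algebra_simps power2_eq_square)
  also have "\<dots> < 0" using assms zero_le_power2[of "2*a*x - b"] by linarith
  finally show ?thesis using assms(1) by (simp add: mult_less_0_iff)
qed

text \<open>
  The bound for \<open>K ln \<gamma>(x/K)\<close> obtained from \<open>ln (1 - \<delta>) \<le> -\<delta> - \<delta>\<^sup>2/2\<close>, with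
  \<open>L = ln K\<close> and a nonnegative cubic term dropped.
\<close>
definition log_gamma_majorant :: "real \<Rightarrow> real \<Rightarrow> real" where
  "log_gamma_majorant K x =
     (let L = ln K; c = L^2 * (1 - 1/K) - 1
      in (L^2 - x) * ln x + x * L - c * x - c * x^2 / (2*K) - x^2 / K)"

lemma ln_less_majorant_coefficient:
  fixes K :: real assumes "7 \<le> K"
  shows "ln K < (ln K)^2 * (1 - 1/K) - 1"
proof -
  have "ln 7 \<le> ln K" using assms by simp
  then have L: "389/200 \<le> ln K" using ln_numeral_bounds(1) by simp
  have "6/7 \<le> 1 - 1/K" using assms by (simp add: field_simps)
  then have "(ln K)^2 * (6/7) \<le> (ln K)^2 * (1 - 1/K)" by (intro mult_left_mono) auto
  moreover have "389/200 * ln K \<le> (ln K)^2" using L by (simp add: power2_eq_square mult_right_mono)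
  ultimately show ?thesis using L by linarith
qed

lemma log_gamma_majorant_neg_large:
  fixes K x :: real
  assumes "7 \<le> K" "(ln K)^2 \<le> x"
  shows "log_gamma_majorant K x < 0"
proof -
  define L c where "L = ln K" and "c = L^2 * (1 - 1/K) - 1"
  have Lc: "L < c" using ln_less_majorant_coefficient[OF assms(1)] by (simp add: L_def c_def)
  have "ln 7 \<le> L" using assms(1) by (simp add: L_def)
  then have "1 \<le> L" using ln_numeral_bounds(1) by simp
  then have "1 \<le> L^2" by (rule one_le_power)
  then have x: "1 \<le> x" using assms(2) by (simp add: L_def)
  then have "(L^2 - x) * ln x \<le> 0" using assms(2) by (simp add: L_def mult_nonpos_nonneg)
  moreover have "x * L < c * x" using Lc x by simp
  moreover have "0 \<le> c * x^2 / (2*K)" "0 \<le> x^2 / K"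
    using Lc \<open>1 \<le> L\<close> assms(1) by auto
  ultimately show ?thesis by (simp add: log_gamma_majorant_def Let_def L_def c_def)
qed

lemma log_gamma_majorant_neg_tangent_one:
  fixes K x :: real
  assumes "21 \<le> K" "0 < x" "x < (ln K)^2"
  shows "log_gamma_majorant K x < 0"
proof -
  define L c where "L = ln K" and "c = L^2 * (1 - 1/K) - 1"
  have "ln 21 \<le> L" using assms(1) by (simp add: L_def)
  then have L3: "3 < L" using ln_numeral_bounds(7) by simp
  have "L^2 < K" using ln_squared_less_self assms(1) by (simp add: L_def)
  then have "L^2/K < 1" using assms(1) by simp
  define B where "B = 2 + L + L^2/K"
  have "0 \<le> L^2/K" using assms(1) by simp
  then have "0 < B" "B < 2*L" using L3 \<open>L^2/K < 1\<close> by (auto simp: B_def)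
  then have "B^2 < (2*L)^2" by (intro power_strict_mono) auto
  then have "B^2 < 4*1*L^2" by (simp add: power_mult_distrib)
  then have quadratic: "-1*x^2 + B*x - L^2 < 0" by (rule quadratic_negative[rotated]) simp
  have "(L^2 - x) * ln x \<le> (L^2 - x) * (x - 1)"
    using assms ln_le_minus_one[of x] by (intro mult_left_mono) (auto simp: L_def)
  moreover have "(L^2 - x) * (x - 1) + x * L - c * x = -1*x^2 + B*x - L^2"
    using assms(1) by (simp add: c_def B_def field_simps power2_eq_square)
  moreover have "0 \<le> c * x^2 / (2*K)" "0 \<le> x^2 / K"
    using ln_less_majorant_coefficient[of K] L3 assms(1) by (auto simp: L_def c_def)
  ultimately show ?thesis using quadratic by (simp add: log_gamma_majorant_def Let_def L_def c_def)
qed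

text \<open>
  The tangent of \<open>ln\<close> at \<open>3/2\<close> turns the majorant into a concave quadratic in \<open>x\<close>, whose
  coefficients are monotone in \<open>K\<close> and \<open>ln K\<close>; \<open>0.404\<close> and \<open>0.407\<close> bound \<open>ln (3/2)\<close>.
\<close>
lemma log_gamma_majorant_neg_tangent_three_halves:
  fixes K x ka kb a b :: real
  assumes K: "ka \<le> K" "K \<le> kb" "3 < ka"
    and L: "a \<le> ln K" "ln K \<le> b" "0 < a"
    and c: "1 \<le> a^2 * (1 - 1/ka)"
    and x: "0 < x" "x < (ln K)^2"
    and discr: "(a^2*(1/ka - 1/3) + b + 2 - 0.404)^2
                  < 4 * (2/3 + (a^2*(1 - 1/ka) - 1)/(2*kb) + 1/kb) * (a^2 * (1 - 0.407))"
  shows "log_gamma_majorant K x < 0"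
proof -
  define L c l where "L = ln K" and "c = L^2 * (1 - 1/K) - 1" and "l = ln (3/2::real)"
  define A0 B0 G0 where "A0 = 2/3 + (a^2*(1 - 1/ka) - 1)/(2*kb) + 1/kb"
    and "B0 = a^2*(1/ka - 1/3) + b + 2 - 0.404" and "G0 = a^2 * (1 - 0.407)"
  have l: "0.404 \<le> l" "l \<le> 0.407" using ln_numeral_bounds(8,9) by (auto simp: l_def)
  have aL: "a^2 \<le> L^2" using L by (intro power_mono) (auto simp: L_def)
  have iK: "1/K \<le> 1/ka" "1/kb \<le> 1/K" using K by (auto intro: divide_left_mono)
  have "ln x - l \<le> 2*x/3 - 1"
    using ln_le_minus_one[of "2*x/3"] x by (simp add: l_def ln_div ln_mult)
  then have tangent: "(L^2 - x) * ln x \<le> (L^2 - x) * (l + 2*x/3 - 1)"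
    using x by (intro mult_left_mono) (auto simp: L_def)
  have "(L^2 - x) * (l + 2*x/3 - 1) + x * L - c * x - c * x^2 / (2*K) - x^2 / K
      = -(2/3 + c/(2*K) + 1/K) * x^2 + (L^2*(1/K - 1/3) + L + 2 - l) * x - L^2 * (1 - l)"
    using K by (simp add: c_def field_simps power2_eq_square)
  also have "\<dots> \<le> -A0 * x^2 + B0 * x - G0"
  proof -
    have "a^2*(1 - 1/ka) \<le> L^2*(1 - 1/K)" using aL iK K by (intro mult_mono) auto
    then have "(a^2*(1 - 1/ka) - 1)/(2*kb) \<le> c/(2*K)"
      using c K by (intro frac_le) (auto simp: c_def)
    then have "A0 \<le> 2/3 + c/(2*K) + 1/K" using iK by (simp add: A0_def)
    then have quadratic_coeff: "A0 * x^2 \<le> (2/3 + c/(2*K) + 1/K) * x^2"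
      by (rule mult_right_mono) simp
    have "L^2*(1/K - 1/3) \<le> a^2*(1/K - 1/3)" using aL iK K by (intro mult_right_mono_neg) auto
    also have "\<dots> \<le> a^2*(1/ka - 1/3)" using iK by (intro mult_left_mono) auto
    finally have "L^2*(1/K - 1/3) + L + 2 - l \<le> B0" using L l by (simp add: B0_def L_def)
    then have linear_coeff: "(L^2*(1/K - 1/3) + L + 2 - l) * x \<le> B0 * x"
      using x by (intro mult_right_mono) auto
    have "G0 \<le> L^2 * (1 - l)" using aL l unfolding G0_def by (intro mult_mono) auto
    with quadratic_coeff linear_coeff show ?thesis by linarith
  qed
  also have "\<dots> < 0"
  proof (rule quadratic_negative)
    show "0 < A0" using c K by (simp add: A0_def add_pos_nonneg)
    show "B0^2 < 4 * A0 * G0" using discr by (simp add: A0_def B0_def G0_def)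
  qed
  finally show ?thesis
    using tangent by (simp add: log_gamma_majorant_def Let_def L_def c_def)
qed

lemma log_gamma_majorant_neg:
  fixes K x :: real
  assumes "K \<in> \<nat>" "7 \<le> K" "0 < x"
  shows "log_gamma_majorant K x < 0"
proof (cases "(ln K)^2 \<le> x")
  case True
  then show ?thesis using assms(2) by (rule log_gamma_majorant_neg_large[rotated])
next
  case small: False
  obtain n where n: "K = real n" using assms(1) by (auto elim: Nats_cases)
  with assms(2) have "n = 7 \<or> (8 \<le> n \<and> n \<le> 10) \<or> (11 \<le> n \<and> n \<le> 20) \<or> 21 \<le> n"
    by linarith
  with n consider "K = 7" | "8 \<le> K" "K \<le> 10" | "11 \<le> K" "K \<le> 20" | "21 \<le> K"
    by fastforce
  then show ?thesis
  proof cases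
    case 1
    show ?thesis
      by (rule log_gamma_majorant_neg_tangent_three_halves
          [where ka=7 and kb=7 and a="1.945" and b="1.947"])
        (use 1 small assms ln_numeral_bounds(1,2) in \<open>auto simp: power2_eq_square\<close>)
  next
    case 2
    have "ln 8 \<le> ln K" "ln K \<le> ln 10" using 2 by simp_all
    then have "2.078 \<le> ln K" "ln K \<le> 2.304" using ln_numeral_bounds(3,4) by linarith+
    then show ?thesis
      by (intro log_gamma_majorant_neg_tangent_three_halves
          [where ka=8 and kb=10 and a="2.078" and b="2.304"])
        (use 2 small assms in \<open>auto simp: power2_eq_square\<close>)
  next
    case 3
    have "ln 11 \<le> ln K" "ln K \<le> ln 20" using 3 by simp_all
    then have "2.397 \<le> ln K" "ln K \<le> 2.997" using ln_numeral_bounds(5,6) by linarith+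
    then show ?thesis
      by (intro log_gamma_majorant_neg_tangent_three_halves
          [where ka=11 and kb=20 and a="2.397" and b="2.997"])
        (use 3 small assms in \<open>auto simp: power2_eq_square\<close>)
  next
    case 4
    then show ?thesis using small assms(3) by (intro log_gamma_majorant_neg_tangent_one) auto
  qed
qed

lemma rpar_pos: "2 \<le> k \<Longrightarrow> 0 < rpar k"
  unfolding rpar_def by simp

lemma pow00_self: "0 \<le> d \<Longrightarrow> pow00 d d = exp (d * ln d)"
  unfolding pow00_def powr_def by simp

lemma gamma_fun_eq:
  assumes "2 \<le> k" "0 \<le> d" "d \<le> 1"
  shows "gamma_fun k d = gfun k d powr rpar k / exp (d * ln d + (1-d) * ln (1-d))"
proof -
  have "pow00 (gfun k d) (rpar k) = gfun k d powr rpar k"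
    using rpar_pos[OF assms(1)] by (simp add: pow00_def)
  then show ?thesis
    using assms by (simp add: gamma_fun_def pow00_self exp_add)
qed

lemma continuous_on_x_ln_x: "continuous_on {0..1::real} (\<lambda>x. x * ln x)"
proof (rule continuous_on_IccI)
  show "((\<lambda>x::real. x * ln x) \<longlongrightarrow> 0 * ln 0) (at_right 0)" by simp real_asymp
  show "((\<lambda>x::real. x * ln x) \<longlongrightarrow> 1 * ln 1) (at_left 1)"
    by (intro tendsto_intros) auto
  show "((\<lambda>x::real. x * ln x) \<longlongrightarrow> x * ln x) (at x)" if "0 < x" "x < 1" for x
    using that by (intro tendsto_intros) auto
qed simp

lemma continuous_on_gamma_fun:
  assumes "2 \<le> k"
  shows "continuous_on {0..1} (gamma_fun k)"
proof -
  have "continuous_on {0..1::real} (\<lambda>d. 1 - d)" by (intro continuous_intros)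
  then have entropy: "continuous_on {0..1::real} (\<lambda>d. (1-d) * ln (1-d))"
    by (rule continuous_on_compose2[OF continuous_on_x_ln_x]) auto
  have power: "continuous_on {0..1} (\<lambda>d. gfun k d powr rpar k)"
    using rpar_pos[OF assms]
    by (intro continuous_on_powr') (auto simp: gfun_def intro!: continuous_intros)
  have "continuous_on {0..1}
      (\<lambda>d. gfun k d powr rpar k / exp (d * ln d + (1-d) * ln (1-d)))"
    by (intro continuous_on_divide power continuous_on_exp continuous_on_add entropy
        continuous_on_x_ln_x) auto
  then show ?thesis
    by (rule continuous_on_cong[THEN iffD1, rotated 2]) (auto simp: gamma_fun_eq[OF assms])
qed

lemma gamma_fun_endpoints:
  assumes "2 \<le> k" "d = 0 \<or> d = 1"
  shows "gamma_fun k d = 0"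
  using assms rpar_pos[OF assms(1)] by (auto simp: gamma_fun_def pow00_def gfun_def)

lemma scaled_ln_gamma_fun_le:
  assumes "7 \<le> k" "0 < d" "d < 1"
  shows "real k * ln (gamma_fun k d) \<le> log_gamma_majorant (real k) (real k * d)"
proof -
  define K L x where "K = real k" and "L = ln K" and "x = K * d"
  have K: "7 \<le> K" using assms(1) by (simp add: K_def)
  have g: "gfun k d = K * d * (1-d)^(k-1)" by (simp add: gfun_def K_def)
  have ln_g: "ln (gfun k d) = L + ln d + (K - 1) * ln (1-d)"
    using K assms(2,3) by (simp add: g L_def K_def ln_mult ln_realpow of_nat_diff)
  have ln_d: "ln d = ln x - L" using K assms(2) by (simp add: x_def L_def ln_mult)
  have r: "rpar k = L^2 / K" by (simp add: rpar_def L_def K_def)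
  have "gfun k d > 0" using K assms(2,3) by (simp add: g)
  then have "ln (gamma_fun k d) = rpar k * ln (gfun k d) - d * ln d - (1-d) * ln (1-d)"
    using assms by (simp add: gamma_fun_eq powr_def flip: exp_diff)
  then have "K * ln (gamma_fun k d)
      = K * (L^2/K * (L + (ln x - L) + (K-1) * ln (1-d)) - d * (ln x - L) - (1-d) * ln (1-d))"
    by (simp only: r ln_g ln_d)
  also have "\<dots> = (L^2 - x) * ln x + x * L + (L^2*(K-1) - K + x) * ln (1-d)"
    using K x_def by (simp add: field_simps power2_eq_square)
  also have "\<dots> \<le> (L^2 - x) * ln x + x * L + (L^2*(K-1) - K + x) * (-(x/K) - (x/K)^2/2)"
  proof -
    have "ln 7 \<le> L" using K by (simp add: L_def)
    then have "389/200 \<le> L" using ln_numeral_bounds(1) by simp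
    then have "(389/200)^2 \<le> L^2" by (rule power_mono) simp
    then have "2 \<le> L^2" by (simp add: power2_eq_square)
    then have "2 * (K - 1) \<le> L^2 * (K - 1)" using K by (intro mult_right_mono) auto
    then have "0 \<le> L^2*(K-1) - K + x" using K assms(2) by (simp add: x_def)
    moreover have "ln (1-d) \<le> -(x/K) - (x/K)^2/2" using ln_one_minus_le assms K by (simp add: x_def)
    ultimately show ?thesis by (simp add: mult_left_mono)
  qed
  also have "\<dots> = log_gamma_majorant K x - x^3/(2*K^2)"
    using K by (simp add: log_gamma_majorant_def Let_def field_simps power2_eq_square power3_eq_cube
        flip: L_def)
  also have "\<dots> \<le> log_gamma_majorant K x" using K assms(2) by (simp add: x_def)
  finally show ?thesis by (simp add: K_def x_def)
qed

lemma gamma_fun_less_one: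
  assumes "7 \<le> k" "0 < d" "d < 1"
  shows "gamma_fun k d < 1"
proof -
  have "real k * ln (gamma_fun k d) < 0"
    using scaled_ln_gamma_fun_le[OF assms] log_gamma_majorant_neg[of "real k" "real k * d"] assms
    by simp
  then have "ln (gamma_fun k d) < 0" using assms(1) by (simp add: mult_less_0_iff)
  moreover have "0 < gamma_fun k d" using assms by (simp add: gamma_fun_eq gfun_def)
  ultimately show ?thesis by simp
qed

theorem mainTheorem5:
  fixes k :: nat
  assumes "k \<ge> 7"
  shows "\<exists>\<delta>0\<in>{0..1}. (\<forall>\<delta>\<in>{0..1}. gamma_fun k \<delta> \<le> gamma_fun k \<delta>0) \<and> gamma_fun k \<delta>0 < 1"
proof -
  have k2: "2 \<le> k" using assms by simp
  obtain d0 where d0: "d0 \<in> {0..1::real}" "\<forall>d\<in>{0..1}. gamma_fun k d \<le> gamma_fun k d0"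
    using continuous_attains_sup[OF _ _ continuous_on_gamma_fun[OF k2]] by auto
  moreover have "gamma_fun k d0 < 1"
  proof (cases "d0 = 0 \<or> d0 = 1")
    case True
    then show ?thesis using gamma_fun_endpoints[OF k2] by simp
  next
    case False
    then show ?thesis using d0(1) gamma_fun_less_one[OF assms] by auto
  qed
  ultimately show ?thesis by blast
qed

end
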